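(* Let $C$ be the closed disk with center $(a,b)$ and radius $r>0$; for $i\in\mathbb{N}$ let $C_i$ be the closed disk with center $(ia,ib)$ and radius $ir$; let $\mathcal{S}=\bigcup_{i\geq0}C_i\cap\mathbb{N}^2$, and let $\tau_1,\tau_2$ be the extremal rays of $L_{\mathbb{Q}_{\geq}}(C\cap\mathbb{R}^2_{\geq})$. Then every $X=(x,y)\in\mathcal{S}\setminus(\tau_1\cup\tau_2)$ satisfies $$\frac{1}{2}\left(\frac{(a,b)\cdot(x,y)}{\sqrt{(\mathrm{d}(X)r)^2-[(b,-a)\cdot(x,y)]^2}}+1\right)\mathrm{d}(X)\ \bmod\ \frac{\mathrm{d}(X)\left(\mathrm{d}((a,b))^2-r^2\right)}{2\sqrt{(\mathrm{d}(X)r)^2-[(b,-a)\cdot(x,y)]^2}}\ \le\ \mathrm{d}(X).$$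
   Context: $\mathbb{N}=\{0,1,2,\dots\}$. For $A\subseteq\mathbb{R}^2_{\geq}$, $L_{\mathbb{Q}_{\geq}}(A)=\{\sum_{i=1}^p q_ia_i\mid p\in\mathbb{N},\ q_i\in\mathbb{Q}_{\geq},\ a_i\in A\}$ and its extremal rays are its two boundary half-lines from the origin. $\mathrm{d}(X)$ is the Euclidean norm of $X$; $\cdot$ is the standard dot product. For real $u$ and $v>0$, $u\bmod v=u-v\lfloor u/v\rfloor$. *)

theory Defs
  imports "HOL-Analysis.Analysis"
begin

definition nonneg_quadrant :: "(real \<times> real) set" where
  "nonneg_quadrant = {(x, y). x \<ge> 0 \<and> y \<ge> 0}"

definition nat_points :: "(real \<times> real) set" where
  "nat_points = {(real m, real n) | m n :: nat. True}"

definition Lcone :: "(real \<times> real) set \<Rightarrow> (real \<times> real) set" where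
  "Lcone A = {(\<Sum>i<p. q i *\<^sub>R v i) | (p :: nat) (q :: nat \<Rightarrow> real) (v :: nat \<Rightarrow> real \<times> real).
                 \<forall>i<p. q i \<in> \<rat> \<and> q i \<ge> 0 \<and> v i \<in> A}"

definition halfline :: "real \<times> real \<Rightarrow> (real \<times> real) set" where
  "halfline u = {t *\<^sub>R u | t. t \<ge> 0}"

definition is_halfline :: "(real \<times> real) set \<Rightarrow> bool" where
  "is_halfline R \<longleftrightarrow> (\<exists>u. u \<noteq> 0 \<and> R = halfline u)"

definition extremal_rays :: "(real \<times> real) set \<Rightarrow> (real \<times> real) set \<Rightarrow> (real \<times> real) set \<Rightarrow> bool" where
  "extremal_rays K \<tau>1 \<tau>2 \<longleftrightarrow> is_halfline \<tau>1 \<and> is_halfline \<tau>2 \<and> frontier K = \<tau>1 \<union> \<tau>2"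

definition circle_semigroup :: "real \<Rightarrow> real \<Rightarrow> real \<Rightarrow> (real \<times> real) set" where
  "circle_semigroup a b r =
     (\<Union>i::nat. cball (real i *\<^sub>R (a, b)) (real i * r)) \<inter> nat_points"

text \<open>u mod v = u - v * floor(u/v) (paper: for v > 0).\<close>
definition rmod :: "real \<Rightarrow> real \<Rightarrow> real" where
  "rmod u v = u - v * of_int \<lfloor>u / v\<rfloor>"

end

theory Submission
  imports Defs
begin

text \<open>Write \<open>d = d(X)\<close>, \<open>s = (a,b)\<cdot>X\<close>, \<open>K = d((a,b))\<^sup>2 - r\<^sup>2\<close>. If \<open>X\<close> lies in the disk
  \<open>C\<^sub>i\<close> then \<open>d\<^sup>2 - 2is + i\<^sup>2K \<le> 0\<close>, so for \<open>K \<ge> 0\<close> the integer \<open>i\<close> lies between the roots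
  \<open>(s \<plusminus> D)/K\<close> of this quadratic, where \<open>D\<^sup>2 = s\<^sup>2 - d\<^sup>2K = (d r)\<^sup>2 - ((b,-a)\<cdot>X)\<^sup>2\<close>.
  The quotient of the two arguments of \<open>mod\<close> is the larger root, so the floor is at least
  \<open>i\<close>, and the remainder is at most the modulus times the distance \<open>2D/K\<close> between the roots,
  which is exactly \<open>d\<close>. For \<open>K < 0\<close> the modulus is negative and the remainder nonpositive.\<close>

lemma rmod_nonpos_of_neg:
  assumes "v < 0"
  shows "rmod u v \<le> 0"
proof -
  have "v * (u / v) \<le> v * of_int \<lfloor>u / v\<rfloor>"
    using assms by (intro mult_left_mono_neg) auto
  with assms show ?thesis by (simp add: rmod_def)
qed

lemma rmod_le_diff_multiple:
  assumes "v \<ge> 0" and "of_int k * v \<le> u"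
  shows "rmod u v \<le> u - of_int k * v"
proof (cases "v = 0")
  case False
  with assms have "of_int k \<le> u / v" by (simp add: pos_le_divide_eq)
  hence "k \<le> \<lfloor>u / v\<rfloor>" by (simp add: le_floor_iff)
  with assms(1) show ?thesis
    unfolding rmod_def by (simp add: mult.commute mult_left_mono)
qed (simp add: rmod_def)

lemma dist_scaleR_le_imp_quadratic:
  fixes X c :: "'a :: real_inner" and t r :: real
  assumes "dist X (t *\<^sub>R c) \<le> t * r"
  shows "(norm X)\<^sup>2 - 2 * t * inner c X + t\<^sup>2 * ((norm c)\<^sup>2 - r\<^sup>2) \<le> 0"
proof -
  have "(norm (X - t *\<^sub>R c))\<^sup>2 \<le> (t * r)\<^sup>2"
    using assms norm_ge_zero by (metis dist_norm power_mono)
  moreover have "(norm (X - t *\<^sub>R c))\<^sup>2 = (norm X)\<^sup>2 - 2 * t * inner c X + t\<^sup>2 * (norm c)\<^sup>2"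
    unfolding power2_norm_eq_inner
    by (simp add: inner_diff_left inner_diff_right inner_commute power2_eq_square algebra_simps
        del: inner_real_def)
  ultimately show ?thesis by (simp add: algebra_simps power_mult_distrib)
qed

lemma rmod_bound_of_quadratic:
  fixes d s K D t :: real
  assumes d: "d \<ge> 0" and t: "t \<in> \<int>"
    and quadratic: "d\<^sup>2 - 2 * t * s + t\<^sup>2 * K \<le> 0"
    and D: "D = sqrt (s\<^sup>2 - d\<^sup>2 * K)"
  shows "rmod (1/2 * (s / D + 1) * d) (d * K / (2 * D)) \<le> d"
proof -
  have completed_square: "(K * t - s)\<^sup>2 = K * (d\<^sup>2 - 2 * t * s + t\<^sup>2 * K) + (s\<^sup>2 - d\<^sup>2 * K)"
    by (simp add: power2_eq_square algebra_simps)
  have radicand: "s\<^sup>2 - d\<^sup>2 * K \<ge> 0"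
  proof (cases "K \<ge> 0")
    case True
    from True quadratic have "K * (d\<^sup>2 - 2 * t * s + t\<^sup>2 * K) \<le> 0"
      by (rule mult_nonneg_nonpos)
    with completed_square show ?thesis using zero_le_power2[of "K * t - s"] by linarith
  next
    case False
    have "d\<^sup>2 * K \<le> 0" using False by (intro mult_nonneg_nonpos) auto
    then show ?thesis using zero_le_power2[of s] by linarith
  qed
  have DD: "D\<^sup>2 = s\<^sup>2 - d\<^sup>2 * K" using D radicand by simp
  have "D \<ge> 0" using D radicand by simp
  with d consider "d = 0 \<or> D = 0" | "d > 0" "D > 0" "K < 0" | "d > 0" "D > 0" "K \<ge> 0"
    by argo
  then show ?thesis
  proof cases
    case 1
    \<comment> \<open>division by zero makes the modulus \<open>0\<close>, and \<open>rmod u 0 = u\<close>\<close>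
    then have "d * K / (2 * D) = 0" by auto
    moreover from 1 d have "1/2 * (s / D + 1) * d \<le> d" by auto
    ultimately show ?thesis by (metis diff_zero mult_zero_left rmod_def)
  next
    case 2
    hence "d * K / (2 * D) < 0" by (simp add: divide_neg_pos mult_pos_neg)
    hence "rmod (1/2 * (s / D + 1) * d) (d * K / (2 * D)) \<le> 0" by (rule rmod_nonpos_of_neg)
    with d show ?thesis by linarith
  next
    case 3
    from \<open>K \<ge> 0\<close> quadratic have "K * (d\<^sup>2 - 2 * t * s + t\<^sup>2 * K) \<le> 0"
      by (rule mult_nonneg_nonpos)
    with completed_square DD have "(K * t - s)\<^sup>2 \<le> D\<^sup>2" by linarith
    hence "\<bar>K * t - s\<bar> \<le> D" using abs_le_square_iff[of "K * t - s" D] \<open>D > 0\<close> by simp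
    hence root_gap: "0 \<le> s + D - t * K" "s + D - t * K \<le> 2 * D" by (auto simp: algebra_simps)
    obtain k where k: "t = of_int k" using t Ints_cases by blast
    have shift: "1/2 * (s / D + 1) * d - t * (d * K / (2 * D)) = d * (s + D - t * K) / (2 * D)"
      using \<open>D > 0\<close> by (simp add: field_simps)
    moreover have "0 \<le> d * (s + D - t * K) / (2 * D)" using 3 root_gap by simp
    ultimately have "t * (d * K / (2 * D)) \<le> 1/2 * (s / D + 1) * d" by linarith
    hence "of_int k * (d * K / (2 * D)) \<le> 1/2 * (s / D + 1) * d" using k by simp
    with 3 have "rmod (1/2 * (s / D + 1) * d) (d * K / (2 * D))
        \<le> 1/2 * (s / D + 1) * d - of_int k * (d * K / (2 * D))"
      by (intro rmod_le_diff_multiple) simp_all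
    also have "\<dots> = d * (s + D - t * K) / (2 * D)" using shift k by simp
    also have "\<dots> \<le> d * (2 * D) / (2 * D)"
      using 3 root_gap by (intro divide_right_mono mult_left_mono) simp_all
    also have "\<dots> = d" using \<open>D > 0\<close> by simp
    finally show ?thesis .
  qed
qed

theorem corollary4p6:
  fixes a b r x y :: real and \<tau>1 \<tau>2 :: "(real \<times> real) set"
  assumes "r > 0"
    and "extremal_rays (Lcone (cball (a, b) r \<inter> nonneg_quadrant)) \<tau>1 \<tau>2"
    and "(x, y) \<in> circle_semigroup a b r - (\<tau>1 \<union> \<tau>2)"
  shows "rmod (1/2 * ((a * x + b * y) / sqrt ((norm (x, y) * r)^2 - (b * x - a * y)^2) + 1) * norm (x, y))
              (norm (x, y) * ((norm (a, b))^2 - r^2) / (2 * sqrt ((norm (x, y) * r)^2 - (b * x - a * y)^2)))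
         \<le> norm (x, y)"
proof -
  from assms(3) obtain i :: nat where "dist (x, y) (real i *\<^sub>R (a, b)) \<le> real i * r"
    unfolding circle_semigroup_def by (auto simp: dist_commute)
  hence quadratic:
      "(norm (x, y))\<^sup>2 - 2 * real i * (a * x + b * y) + (real i)\<^sup>2 * ((norm (a, b))\<^sup>2 - r\<^sup>2) \<le> 0"
    using dist_scaleR_le_imp_quadratic by fastforce
  have "(norm (x, y) * r)\<^sup>2 - (b * x - a * y)\<^sup>2
      = (a * x + b * y)\<^sup>2 - (norm (x, y))\<^sup>2 * ((norm (a, b))\<^sup>2 - r\<^sup>2)"
    by (simp add: norm_Pair power_mult_distrib power2_eq_square algebra_simps)
  then have "sqrt ((norm (x, y) * r)\<^sup>2 - (b * x - a * y)\<^sup>2)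
      = sqrt ((a * x + b * y)\<^sup>2 - (norm (x, y))\<^sup>2 * ((norm (a, b))\<^sup>2 - r\<^sup>2))"
    by (rule arg_cong)
  then show ?thesis by (rule rmod_bound_of_quadratic[OF norm_ge_zero Ints_of_nat quadratic])
qed

end
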